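(* Let $K\in\mathbb{N}$, $\gamma>0$, and let $h\colon\mathbb{R}^K\to\mathbb{R}\cup\{+\infty\}$, $h(\alpha)=\|\alpha\|_0+\iota_{\Delta_K}(\alpha)$. Let $\alpha\in\Delta_K$ with $\alpha_1\le\cdots\le\alpha_K$. Then: (i) An element $\hat\alpha\in\operatorname{prox}_{\gamma h}(\alpha)$ is given by $\hat\alpha_J=0$ and $\hat\alpha_{J^c}=\alpha_{J^c}+\frac{1}{|J^c|}\sum_{k\in J}\alpha_k$, where $J=[K_0]=\{1,\dots,K_0\}$, $J^c=[K]\setminus J$, and $$K_0\in\operatorname*{argmin}_{n\in\{0,\dots,K-1\}} g(n),\qquad g(n)=\frac{1}{2\gamma}\frac{\big(\sum_{k=1}^n\alpha_k\big)^2}{K-n}+\frac{1}{2\gamma}\sum_{k=1}^n\alpha_k^2-n.$$ (ii) If $\alpha_i=0$ for some $i\in\{1,\dots,K\}$, then $\hat\alpha_i=0$ for every $\hat\alpha\in\operatorname{prox}_{\gamma h}(\alpha)$.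
   Context: $\Delta_K=\{\alpha\in\mathbb{R}^K_{\ge0}:\sum_{k=1}^K\alpha_k=1\}$ is the probability simplex; $\|\alpha\|_0=|\{k:\alpha_k>0\}|$; $\iota_{\Delta_K}(\alpha)=0$ if $\alpha\in\Delta_K$ and $+\infty$ otherwise. For a proper lower semicontinuous $g\colon\mathbb{R}^K\to\mathbb{R}\cup\{+\infty\}$ and $\gamma>0$, the (possibly set-valued) proximal operator is $\operatorname{prox}_{\gamma g}(x)=\operatorname*{argmin}_{y\in\mathbb{R}^K}\{\frac{1}{2\gamma}\|x-y\|^2+g(y)\}$, with $\|\cdot\|$ the Euclidean norm. For $J\subseteq[K]$, $\alpha_J=(\alpha_k)_{k\in J}$; $[0]=\emptyset$. *)

theory Defs
  imports "HOL-Analysis.Analysis"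
begin

text \<open>Vectors in R^K are represented as functions nat => real indexed by {1..K}
  and vanishing outside {1..K}.\<close>

definition RK :: "nat \<Rightarrow> (nat \<Rightarrow> real) set" where
  "RK K = {a. \<forall>k. k \<notin> {1..K} \<longrightarrow> a k = 0}"

definition prob_simplex :: "nat \<Rightarrow> (nat \<Rightarrow> real) set" where
  "prob_simplex K = {a \<in> RK K. (\<forall>k\<in>{1..K}. a k \<ge> 0) \<and> (\<Sum>k=1..K. a k) = 1}"

definition l0norm :: "nat \<Rightarrow> (nat \<Rightarrow> real) \<Rightarrow> nat" where
  "l0norm K a = card {k\<in>{1..K}. a k > 0}"

definition indicator_simplex :: "nat \<Rightarrow> (nat \<Rightarrow> real) \<Rightarrow> ereal" where
  "indicator_simplex K a = (if a \<in> prob_simplex K then 0 else \<infinity>)"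

definition hfun :: "nat \<Rightarrow> (nat \<Rightarrow> real) \<Rightarrow> ereal" where
  "hfun K a = ereal (real (l0norm K a)) + indicator_simplex K a"

definition sqdist :: "nat \<Rightarrow> (nat \<Rightarrow> real) \<Rightarrow> (nat \<Rightarrow> real) \<Rightarrow> real" where
  "sqdist K x y = (\<Sum>k=1..K. (x k - y k)^2)"

definition prox :: "nat \<Rightarrow> real \<Rightarrow> ((nat \<Rightarrow> real) \<Rightarrow> ereal) \<Rightarrow> (nat \<Rightarrow> real) \<Rightarrow> (nat \<Rightarrow> real) set" where
  "prox K \<gamma> g x = {y \<in> RK K. \<forall>z \<in> RK K.
      ereal (sqdist K x y / (2*\<gamma>)) + g y \<le> ereal (sqdist K x z / (2*\<gamma>)) + g z}"

definition gfun :: "nat \<Rightarrow> real \<Rightarrow> (nat \<Rightarrow> real) \<Rightarrow> nat \<Rightarrow> real" where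
  "gfun K \<gamma> a n = 1/(2*\<gamma>) * (\<Sum>k=1..n. a k)^2 / real (K - n)
                   + 1/(2*\<gamma>) * (\<Sum>k=1..n. (a k)^2) - real n"

end

theory Submission
  imports Defs
begin

text \<open>Split the proximal problem according to the positive support T of the candidate
  point. Among the points of the simplex vanishing off T, the one nearest to alpha spreads the
  mass of alpha on J = [K] - T uniformly over T; by Cauchy-Schwarz its squared distance
  sum_J alpha_k^2 + (sum_J alpha_k)^2 / |T| bounds that of every such point from below. For
  increasing alpha and |J| = n both sums are smallest for J = [n], so the tail {K0+1..K} with K0
  minimizing g is an optimal support, of cost g(K0) + K. If alpha_i = 0 while i lies in the
  support T of a prox point, then either supp alpha lies in T - {i}, and alpha itself has a
  smaller objective, or exchanging i for some j outside T with alpha_j > 0 strictly lowers the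
  cost.\<close>

definition pos_support :: "nat \<Rightarrow> (nat \<Rightarrow> real) \<Rightarrow> nat set" where
  "pos_support K a = {k\<in>{1..K}. a k > 0}"

definition face_proj :: "nat \<Rightarrow> (nat \<Rightarrow> real) \<Rightarrow> nat set \<Rightarrow> nat \<Rightarrow> real" where
  "face_proj K a T = (\<lambda>k. if k \<in> T then a k + (\<Sum>j\<in>{1..K} - T. a j) / card T else 0)"

definition face_sqdist :: "nat \<Rightarrow> (nat \<Rightarrow> real) \<Rightarrow> nat set \<Rightarrow> real" where
  "face_sqdist K a T = (\<Sum>k\<in>{1..K} - T. (a k)^2) + (\<Sum>k\<in>{1..K} - T. a k)^2 / card T"

definition face_cost :: "nat \<Rightarrow> real \<Rightarrow> (nat \<Rightarrow> real) \<Rightarrow> nat set \<Rightarrow> real" where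
  "face_cost K \<gamma> a T = face_sqdist K a T / (2*\<gamma>) + card T"

definition prox_obj :: "nat \<Rightarrow> real \<Rightarrow> (nat \<Rightarrow> real) \<Rightarrow> (nat \<Rightarrow> real) \<Rightarrow> ereal" where
  "prox_obj K \<gamma> x y = ereal (sqdist K x y / (2*\<gamma>)) + hfun K y"

lemma mem_prox_iff:
  "y \<in> prox K \<gamma> (hfun K) x \<longleftrightarrow> y \<in> RK K \<and> (\<forall>z\<in>RK K. prox_obj K \<gamma> x y \<le> prox_obj K \<gamma> x z)"
  by (simp add: prox_def prox_obj_def)

lemma prox_obj_simplex:
  "y \<in> prob_simplex K \<Longrightarrow> prox_obj K \<gamma> x y = ereal (sqdist K x y / (2*\<gamma>) + l0norm K y)"
  by (simp add: prox_obj_def hfun_def indicator_simplex_def)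

lemma prox_obj_not_simplex: "y \<notin> prob_simplex K \<Longrightarrow> prox_obj K \<gamma> x y = \<infinity>"
  by (simp add: prox_obj_def hfun_def indicator_simplex_def)

lemma prob_simplex_subset_RK: "prob_simplex K \<subseteq> RK K"
  by (auto simp: prob_simplex_def)

lemma prob_simplex_nonneg:
  assumes "a \<in> prob_simplex K"
  shows "0 \<le> a k"
  using assms by (cases "k \<in> {1..K}") (auto simp: prob_simplex_def RK_def)

lemma prob_simplex_sum: "a \<in> prob_simplex K \<Longrightarrow> (\<Sum>k=1..K. a k) = 1"
  by (simp add: prob_simplex_def)

lemma sum_split_subset:
  fixes f :: "nat \<Rightarrow> 'b::comm_monoid_add"
  assumes "T \<subseteq> {1..K}"
  shows "(\<Sum>k=1..K. f k) = sum f T + sum f ({1..K} - T)"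
  using sum.subset_diff[OF assms] by (simp add: add.commute)

lemma l0norm_eq_card_pos_support: "l0norm K a = card (pos_support K a)"
  by (simp add: l0norm_def pos_support_def)

lemma pos_support_subset: "pos_support K a \<subseteq> {1..K}"
  by (auto simp: pos_support_def)

lemma pos_support_nonempty:
  assumes "a \<in> prob_simplex K"
  shows "pos_support K a \<noteq> {}"
proof
  assume empty: "pos_support K a = {}"
  have "a k = 0" if "k \<in> {1..K}" for k
    using that empty prob_simplex_nonneg[OF assms, of k] by (force simp: pos_support_def)
  then show False
    using prob_simplex_sum[OF assms] by simp
qed

lemma sum_initial_segment_le:
  fixes f :: "nat \<Rightarrow> 'a::linordered_idom"
  assumes mono: "mono_on {1..K} f" and J: "J \<subseteq> {1..K}"
  shows "(\<Sum>k=1..card J. f k) \<le> sum f J"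
proof -
  define n where "n = card J"
  have fin: "finite J" using J finite_subset by blast
  have nK: "n \<le> K" using card_mono[OF _ J] by (simp add: n_def)
  define I where "I = {1..n} \<inter> J"
  define A where "A = {1..n} - J"
  define B where "B = J - {1..n}"
  have "card A = card B"
    using fin by (simp add: A_def B_def card_Diff_subset_Int Int_commute n_def)
  have "sum f A \<le> of_nat (card A) * f n"
    using mono nK by (intro sum_bounded_above) (auto simp: A_def intro: mono_onD)
  also have "\<dots> = of_nat (card B) * f n" using \<open>card A = card B\<close> by simp
  also have "\<dots> \<le> sum f B"
  proof (rule sum_bounded_below)
    fix k assume "k \<in> B"
    then have "k \<in> J" "k \<in> {1..K}" "n < k" using J by (auto simp: B_def)
    moreover from \<open>k \<in> J\<close> have "1 \<le> n" using fin by (auto simp: n_def Suc_le_eq card_gt_0_iff)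
    ultimately have "n \<in> {1..K}" "k \<in> {1..K}" "n \<le> k" using nK by auto
    then show "f n \<le> f k" by (rule mono_onD[OF mono])
  qed
  finally have "sum f A \<le> sum f B" .
  moreover have "(\<Sum>k=1..n. f k) = sum f I + sum f A"
    unfolding A_def I_def by (rule sum.Int_Diff) simp
  moreover have "sum f J = sum f I + sum f B"
    using sum.Int_Diff[OF fin, of f "{1..n}"] by (simp add: B_def I_def Int_commute)
  ultimately show ?thesis by (simp add: n_def)
qed

lemma face_proj_in_simplex:
  assumes a: "a \<in> prob_simplex K" and T: "T \<subseteq> {1..K}" "T \<noteq> {}"
  shows "face_proj K a T \<in> prob_simplex K"
proof -
  define c where "c = (\<Sum>j\<in>{1..K} - T. a j) / card T"
  have proj: "face_proj K a T = (\<lambda>k. if k \<in> T then a k + c else 0)"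
    unfolding face_proj_def c_def ..
  have cardT: "card T > 0" using T finite_subset by (auto simp: card_gt_0_iff)
  have "c \<ge> 0" unfolding c_def using prob_simplex_nonneg[OF a] by (simp add: sum_nonneg)
  then have nonneg: "face_proj K a T k \<ge> 0" for k
    using prob_simplex_nonneg[OF a, of k] by (simp add: proj)
  have "(\<Sum>k=1..K. face_proj K a T k) = (\<Sum>k\<in>T. a k + c)"
    unfolding sum_split_subset[OF T(1)] by (simp add: proj)
  also have "\<dots> = sum a T + sum a ({1..K} - T)"
    using cardT by (simp add: sum.distrib c_def)
  also have "\<dots> = 1"
    using sum_split_subset[OF T(1), of a] prob_simplex_sum[OF a] by simp
  finally show ?thesis
    using nonneg T(1) by (auto simp: prob_simplex_def RK_def proj)
qed

lemma sqdist_face_proj: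
  assumes "T \<subseteq> {1..K}" "T \<noteq> {}"
  shows "sqdist K a (face_proj K a T) = face_sqdist K a T"
proof -
  define J where "J = {1..K} - T"
  define c where "c = sum a J / card T"
  have proj: "face_proj K a T = (\<lambda>k. if k \<in> T then a k + c else 0)"
    unfolding face_proj_def c_def J_def ..
  have cardT: "card T > 0" using assms finite_subset by (auto simp: card_gt_0_iff)
  have "sqdist K a (face_proj K a T) = (\<Sum>k\<in>T. c^2) + (\<Sum>k\<in>J. (a k)^2)"
    unfolding sqdist_def sum_split_subset[OF assms(1)] J_def[symmetric] by (simp add: proj J_def)
  also have "(\<Sum>k\<in>T. c^2) = (sum a J)^2 / card T"
    using cardT by (simp add: c_def power2_eq_square)
  finally show ?thesis
    unfolding face_sqdist_def J_def by simp
qed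

lemma l0norm_face_proj_le:
  assumes "T \<subseteq> {1..K}"
  shows "l0norm K (face_proj K a T) \<le> card T"
  unfolding l0norm_def
  using assms finite_subset by (intro card_mono) (auto simp: face_proj_def)

lemma face_sqdist_le_sqdist:
  assumes a: "a \<in> prob_simplex K" and b: "b \<in> prob_simplex K"
    and T: "T \<subseteq> {1..K}" "T \<noteq> {}" and b_off: "\<forall>k\<in>{1..K} - T. b k = 0"
  shows "face_sqdist K a T \<le> sqdist K a b"
proof -
  define J where "J = {1..K} - T"
  have cardT: "card T > 0" using T finite_subset by (auto simp: card_gt_0_iff)
  have "sum b T = 1"
    using sum_split_subset[OF T(1), of b] prob_simplex_sum[OF b] b_off by simp
  moreover have "sum a T + sum a J = 1"
    using sum_split_subset[OF T(1), of a] prob_simplex_sum[OF a] by (simp add: J_def)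
  ultimately have "(\<Sum>k\<in>T. b k - a k) = sum a J"
    by (simp add: sum_subtractf)
  then have "(sum a J)^2 / card T \<le> (\<Sum>k\<in>T. (b k - a k)^2)"
    using sum_squared_le_sum_of_squares[of "\<lambda>k. b k - a k" T] cardT
    by (simp add: divide_le_eq)
  moreover have "sqdist K a b = (\<Sum>k\<in>T. (b k - a k)^2) + (\<Sum>k\<in>J. (a k)^2)"
    unfolding sqdist_def sum_split_subset[OF T(1)] J_def[symmetric]
    using b_off by (simp add: J_def power2_commute)
  ultimately show ?thesis
    unfolding face_sqdist_def J_def[symmetric] by linarith
qed

lemma prox_obj_face_proj_le:
  assumes "a \<in> prob_simplex K" "T \<subseteq> {1..K}" "T \<noteq> {}"
  shows "prox_obj K \<gamma> a (face_proj K a T) \<le> ereal (face_cost K \<gamma> a T)"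
  using assms l0norm_face_proj_le[OF assms(2), of a]
  by (simp add: prox_obj_simplex face_proj_in_simplex sqdist_face_proj face_cost_def)

lemma face_cost_pos_support_le_prox_obj:
  assumes "\<gamma> > 0" "a \<in> prob_simplex K" "b \<in> prob_simplex K"
  shows "ereal (face_cost K \<gamma> a (pos_support K b)) \<le> prox_obj K \<gamma> a b"
proof -
  have "\<forall>k\<in>{1..K} - pos_support K b. b k = 0"
    using prob_simplex_nonneg[OF assms(3)] unfolding pos_support_def by (auto simp: le_less)
  then have "face_sqdist K a (pos_support K b) \<le> sqdist K a b"
    using assms pos_support_subset pos_support_nonempty by (intro face_sqdist_le_sqdist)
  then show ?thesis
    using assms(1,3)
    by (simp add: prox_obj_simplex face_cost_def l0norm_eq_card_pos_support divide_right_mono)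
qed

lemma face_proj_in_prox:
  assumes "\<gamma> > 0" "a \<in> prob_simplex K" "T \<subseteq> {1..K}" "T \<noteq> {}"
    and minimal: "\<And>T'. T' \<subseteq> {1..K} \<Longrightarrow> T' \<noteq> {} \<Longrightarrow> face_cost K \<gamma> a T \<le> face_cost K \<gamma> a T'"
  shows "face_proj K a T \<in> prox K \<gamma> (hfun K) a"
  unfolding mem_prox_iff
proof (intro conjI ballI)
  show "face_proj K a T \<in> RK K"
    using assms face_proj_in_simplex prob_simplex_subset_RK by blast
  fix z assume "z \<in> RK K"
  show "prox_obj K \<gamma> a (face_proj K a T) \<le> prox_obj K \<gamma> a z"
  proof (cases "z \<in> prob_simplex K")
    case True
    have "prox_obj K \<gamma> a (face_proj K a T) \<le> ereal (face_cost K \<gamma> a T)"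
      using assms by (intro prox_obj_face_proj_le)
    also have "\<dots> \<le> ereal (face_cost K \<gamma> a (pos_support K z))"
      using minimal pos_support_subset pos_support_nonempty[OF True] by simp
    also have "\<dots> \<le> prox_obj K \<gamma> a z"
      using assms True by (intro face_cost_pos_support_le_prox_obj)
    finally show ?thesis .
  qed (simp add: prox_obj_not_simplex)
qed

lemma mono_on_square_nonneg:
  fixes f :: "'a::order \<Rightarrow> 'b::linordered_semidom"
  assumes "mono_on A f" "\<And>k. 0 \<le> f k"
  shows "mono_on A (\<lambda>k. (f k)^2)"
  using assms by (intro mono_onI power_mono) (auto dest: mono_onD)

lemma gfun_le_face_cost:
  assumes "\<gamma> > 0" and a: "a \<in> prob_simplex K" and mono: "mono_on {1..K} a"
    and T: "T \<subseteq> {1..K}" "T \<noteq> {}"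
  shows "gfun K \<gamma> a (K - card T) + K \<le> face_cost K \<gamma> a T"
proof -
  define J where "J = {1..K} - T"
  have finT: "finite T" using T finite_subset by blast
  have J: "J \<subseteq> {1..K}" by (simp add: J_def)
  have cardJ: "card J = K - card T" using card_Diff_subset[OF finT T(1)] by (simp add: J_def)
  have "card T \<le> K" using card_mono[OF _ T(1)] by simp
  then have cardT: "real (K - card J) = card T" by (simp add: cardJ)
  have "0 \<le> (\<Sum>k=1..card J. a k)"
    using prob_simplex_nonneg[OF a] by (simp add: sum_nonneg)
  then have sum_le: "(\<Sum>k=1..card J. a k)^2 \<le> (sum a J)^2"
    using sum_initial_segment_le[OF mono J] by (rule power_mono[rotated])
  have sum_sq_le: "(\<Sum>k=1..card J. (a k)^2) \<le> (\<Sum>k\<in>J. (a k)^2)"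
    using mono_on_square_nonneg[OF mono prob_simplex_nonneg[OF a]] J
    by (rule sum_initial_segment_le)
  have "gfun K \<gamma> a (card J) + K
      = ((\<Sum>k=1..card J. a k)^2 / card T + (\<Sum>k=1..card J. (a k)^2)) / (2*\<gamma>) + card T"
    unfolding gfun_def cardT using cardJ \<open>card T \<le> K\<close> by (simp add: add_divide_distrib)
  also have "\<dots> \<le> ((sum a J)^2 / card T + (\<Sum>k\<in>J. (a k)^2)) / (2*\<gamma>) + card T"
    using sum_le sum_sq_le \<open>\<gamma> > 0\<close> by (intro add_mono divide_right_mono) auto
  also have "\<dots> = face_cost K \<gamma> a T"
    unfolding face_cost_def face_sqdist_def J_def by simp
  finally show ?thesis by (simp add: cardJ)
qed

lemma face_cost_tail:
  assumes "K0 < K"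
  shows "face_cost K \<gamma> a {K0<..K} = gfun K \<gamma> a K0 + K"
proof -
  have "{1..K} - {K0<..K} = {1..K0}" using assms by auto
  then show ?thesis
    using assms by (simp add: face_cost_def face_sqdist_def gfun_def of_nat_diff add_divide_distrib)
qed

lemma tail_face_cost_minimal:
  assumes "\<gamma> > 0" "a \<in> prob_simplex K" "mono_on {1..K} a"
    and "K0 < K" and gfun_min: "\<forall>n<K. gfun K \<gamma> a K0 \<le> gfun K \<gamma> a n"
    and T: "T \<subseteq> {1..K}" "T \<noteq> {}"
  shows "face_cost K \<gamma> a {K0<..K} \<le> face_cost K \<gamma> a T"
proof -
  have "card T > 0" using T finite_subset by (auto simp: card_gt_0_iff)
  then have "gfun K \<gamma> a K0 \<le> gfun K \<gamma> a (K - card T)"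
    using gfun_min \<open>K0 < K\<close> by simp
  then show ?thesis
    using face_cost_tail[OF \<open>K0 < K\<close>] gfun_le_face_cost[OF assms(1-3) T] by simp
qed

lemma prox_in_simplex:
  assumes "a \<in> prob_simplex K" "b \<in> prox K \<gamma> (hfun K) a"
  shows "b \<in> prob_simplex K"
proof (rule ccontr)
  assume "b \<notin> prob_simplex K"
  moreover have "prox_obj K \<gamma> a b \<le> prox_obj K \<gamma> a a"
    using assms prob_simplex_subset_RK by (auto simp: mem_prox_iff)
  ultimately show False
    using assms(1) by (simp add: prox_obj_simplex prox_obj_not_simplex)
qed

lemma card_le_face_cost:
  assumes "\<gamma> > 0"
  shows "real (card T) \<le> face_cost K \<gamma> a T"
  using assms by (simp add: face_cost_def face_sqdist_def sum_nonneg)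

lemma face_cost_exchange_less:
  assumes "\<gamma> > 0" and a: "a \<in> prob_simplex K" and T: "T \<subseteq> {1..K}"
    and i: "i \<in> T" "a i = 0" and j: "j \<in> {1..K} - T" "a j > 0"
  shows "face_cost K \<gamma> a (insert j (T - {i})) < face_cost K \<gamma> a T"
proof -
  define J where "J = {1..K} - T"
  define s where "s = sum a J"
  define q where "q = (\<Sum>k\<in>J. (a k)^2)"
  have finT: "finite T" using T finite_subset by blast
  have jJ: "j \<in> J" and iJ: "i \<notin> J" using i j by (auto simp: J_def)
  have J': "{1..K} - insert j (T - {i}) = insert i (J - {j})"
    using T i j by (auto simp: J_def)
  have "card T > 0" using finT i(1) by (auto simp: card_gt_0_iff)
  then have card_eq: "card (insert j (T - {i})) = card T"
    using finT i j by (simp add: card_insert_disjoint)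
  have sum_J': "sum f (insert i (J - {j})) = f i + sum f J - f j" for f :: "nat \<Rightarrow> real"
    using jJ iJ by (simp add: J_def sum_diff1)
  have "a j \<le> s"
    unfolding s_def using jJ prob_simplex_nonneg[OF a] by (intro member_le_sum) (auto simp: J_def)
  then have "(s - a j)^2 \<le> s^2"
    using j(2) by (intro power_mono) auto
  then have "(s - a j)^2 / card T \<le> s^2 / card T"
    by (simp add: divide_right_mono)
  moreover have "(a j)^2 > 0" using j(2) by simp
  ultimately have "q - (a j)^2 + (s - a j)^2 / card T < q + s^2 / card T"
    by linarith
  then have "face_sqdist K a (insert j (T - {i})) < face_sqdist K a T"
    unfolding face_sqdist_def J' sum_J' card_eq J_def[symmetric]
    using i(2) by (simp add: s_def q_def)
  then show ?thesis
    using \<open>\<gamma> > 0\<close> card_eq by (simp add: face_cost_def divide_strict_right_mono)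
qed

lemma prox_preserves_zero:
  assumes "\<gamma> > 0" and a: "a \<in> prob_simplex K" and i: "i \<in> {1..K}" "a i = 0"
    and b: "b \<in> prox K \<gamma> (hfun K) a"
  shows "b i = 0"
proof (rule ccontr)
  assume "b i \<noteq> 0"
  define T where "T = pos_support K b"
  have b_simplex: "b \<in> prob_simplex K" using prox_in_simplex[OF a b] .
  have iT: "i \<in> T"
    using \<open>b i \<noteq> 0\<close> i prob_simplex_nonneg[OF b_simplex, of i] by (simp add: T_def pos_support_def)
  have T: "T \<subseteq> {1..K}" unfolding T_def by (rule pos_support_subset)
  then have "finite T" by (rule finite_subset) simp
  have b_opt: "prox_obj K \<gamma> a b \<le> prox_obj K \<gamma> a z" if "z \<in> prob_simplex K" for z
    using b that prob_simplex_subset_RK by (auto simp: mem_prox_iff)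
  have b_ge: "ereal (face_cost K \<gamma> a T) \<le> prox_obj K \<gamma> a b"
    unfolding T_def using assms(1) a b_simplex by (rule face_cost_pos_support_le_prox_obj)
  show False
  proof (cases "pos_support K a \<subseteq> T")
    case True
    then have "pos_support K a \<subseteq> T - {i}"
      using i by (auto simp: pos_support_def)
    then have "l0norm K a < card T"
      unfolding l0norm_eq_card_pos_support
      using \<open>finite T\<close> iT by (meson card_Diff1_less card_mono finite_Diff order_le_less_trans)
    then have "prox_obj K \<gamma> a a < ereal (face_cost K \<gamma> a T)"
      using a card_le_face_cost[OF assms(1), of T K a]
      by (simp add: prox_obj_simplex sqdist_def)
    with b_ge b_opt[OF a] show False by simp
  next
    case False
    then obtain j where j: "j \<in> {1..K} - T" "a j > 0"
      by (auto simp: pos_support_def)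
    define T' where "T' = insert j (T - {i})"
    have T': "T' \<subseteq> {1..K}" "T' \<noteq> {}" using T j by (auto simp: T'_def)
    have "prox_obj K \<gamma> a (face_proj K a T') \<le> ereal (face_cost K \<gamma> a T')"
      using a T' by (rule prox_obj_face_proj_le)
    also have "\<dots> < ereal (face_cost K \<gamma> a T)"
      unfolding T'_def using face_cost_exchange_less[OF assms(1) a T iT i(2) j] by simp
    finally show False
      using b_ge b_opt[OF face_proj_in_simplex[OF a T']] by simp
  qed
qed

theorem lemma3:
  fixes K K0 :: nat and \<gamma> :: real and \<alpha> :: "nat \<Rightarrow> real"
  assumes "\<gamma> > 0"
    and "\<alpha> \<in> prob_simplex K"
    and "\<forall>i j. 1 \<le> i \<longrightarrow> i \<le> j \<longrightarrow> j \<le> K \<longrightarrow> \<alpha> i \<le> \<alpha> j"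
    and "K0 < K"
    and "\<forall>n<K. gfun K \<gamma> \<alpha> K0 \<le> gfun K \<gamma> \<alpha> n"
  shows "(\<lambda>k. if k \<in> {1..K} then
               (if k \<le> K0 then 0 else \<alpha> k + (\<Sum>j=1..K0. \<alpha> j) / real (K - K0))
             else 0) \<in> prox K \<gamma> (hfun K) \<alpha>
     \<and> (\<forall>i\<in>{1..K}. \<alpha> i = 0 \<longrightarrow> (\<forall>\<beta> \<in> prox K \<gamma> (hfun K) \<alpha>. \<beta> i = 0))"
proof -
  have mono: "mono_on {1..K} \<alpha>"
    using assms(3) by (auto intro: mono_onI)
  have tail: "{K0<..K} \<subseteq> {1..K}" "{K0<..K} \<noteq> {}" "{1..K} - {K0<..K} = {1..K0}"
    using \<open>K0 < K\<close> by auto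
  have "(\<lambda>k. if k \<in> {1..K} then
               (if k \<le> K0 then 0 else \<alpha> k + (\<Sum>j=1..K0. \<alpha> j) / real (K - K0))
             else 0) = face_proj K \<alpha> {K0<..K}"
    using \<open>K0 < K\<close> by (auto simp: face_proj_def tail(3))
  moreover have "face_proj K \<alpha> {K0<..K} \<in> prox K \<gamma> (hfun K) \<alpha>"
    using assms(1,2) tail(1,2)
    by (rule face_proj_in_prox) (rule tail_face_cost_minimal[OF assms(1,2) mono assms(4,5)])
  ultimately show ?thesis
    using prox_preserves_zero[OF assms(1,2)] by auto
qed

end
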